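(* Let $H$ be a graph with at least one edge and no isolated vertices, and let $t\ge 1$. Let $C$ be the graph obtained from $\mu_t(H)$ by adding $\ell\ge 1$ new vertices $x_1,\dots,x_\ell$, each adjacent only to the root $w$ of $\mu_t(H)$. If $S$ is a subset of $V(\mu_t(H))\setminus\{w\}$ of minimum size among those subsets $S'$ for which $S'\cup\{w\}$ is a determining set for $\mu_t(H)$, then $S\cup\{x_2,\dots,x_\ell\}$ is a minimum size determining set for $C$.
   Context: All graphs are finite and simple. For a graph $G$ with $V(G)=\{v_1,\dots,v_n\}$ and an integer $t\ge1$, the generalized Mycielskian $\mu_t(G)$ has vertex set $\{u_i^s: 1\le i\le n,\ 0\le s\le t\}\cup\{w\}$, where $u_i^0$ is identified with $v_i$. Its edges are: $u_i^0u_j^0$ for each edge $v_iv_j$ of $G$; $u_i^su_j^{s+1}$ and $u_j^su_i^{s+1}$ for each edge $v_iv_j$ of $G$ and each $0\le s<t$; and $u_i^tw$ for all $1\le i\le n$. The vertex $w$ is called the root, and $u_i^s$ is the shadow of $v_i$ at level $s$. A set $S\subseteq V(G)$ is a determining set for $G$ if the only automorphism of $G$ fixing every vertex of $S$ is the identity. *)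

theory Defs
  imports Main
begin

definition simple_graph :: "'a set \<Rightarrow> ('a \<Rightarrow> 'a \<Rightarrow> bool) \<Rightarrow> bool" where
  "simple_graph V E \<longleftrightarrow> finite V \<and> (\<forall>x y. E x y \<longrightarrow> E y x) \<and> (\<forall>x. \<not> E x x)
     \<and> (\<forall>x y. E x y \<longrightarrow> x \<in> V \<and> y \<in> V)"

definition has_edge :: "'a set \<Rightarrow> ('a \<Rightarrow> 'a \<Rightarrow> bool) \<Rightarrow> bool" where
  "has_edge V E \<longleftrightarrow> (\<exists>x\<in>V. \<exists>y\<in>V. E x y)"

definition no_isolated :: "'a set \<Rightarrow> ('a \<Rightarrow> 'a \<Rightarrow> bool) \<Rightarrow> bool" where
  "no_isolated V E \<longleftrightarrow> (\<forall>x\<in>V. \<exists>y\<in>V. E x y)"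

definition automorphism :: "'a set \<Rightarrow> ('a \<Rightarrow> 'a \<Rightarrow> bool) \<Rightarrow> ('a \<Rightarrow> 'a) \<Rightarrow> bool" where
  "automorphism V E f \<longleftrightarrow> bij_betw f V V \<and> (\<forall>x\<in>V. \<forall>y\<in>V. E x y \<longleftrightarrow> E (f x) (f y))"

definition determining_set :: "'a set \<Rightarrow> ('a \<Rightarrow> 'a \<Rightarrow> bool) \<Rightarrow> 'a set \<Rightarrow> bool" where
  "determining_set V E S \<longleftrightarrow> S \<subseteq> V \<and>
     (\<forall>f. automorphism V E f \<longrightarrow> (\<forall>s\<in>S. f s = s) \<longrightarrow> (\<forall>v\<in>V. f v = v))"

definition min_determining_set :: "'a set \<Rightarrow> ('a \<Rightarrow> 'a \<Rightarrow> bool) \<Rightarrow> 'a set \<Rightarrow> bool" where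
  "min_determining_set V E S \<longleftrightarrow> determining_set V E S \<and>
     (\<forall>S'. determining_set V E S' \<longrightarrow> card S \<le> card S')"

text \<open>Vertices of the generalized Mycielskian: shadows U v s (level s) and the root W.
  U v 0 is identified with v.\<close>
datatype 'a myc = U 'a nat | W

definition myc_V :: "'a set \<Rightarrow> nat \<Rightarrow> 'a myc set" where
  "myc_V V t = {U v s | v s. v \<in> V \<and> s \<le> t} \<union> {W}"

fun myc_E :: "'a set \<Rightarrow> ('a \<Rightarrow> 'a \<Rightarrow> bool) \<Rightarrow> nat \<Rightarrow> 'a myc \<Rightarrow> 'a myc \<Rightarrow> bool" where
  "myc_E V E t (U a s) (U b r) \<longleftrightarrow> a \<in> V \<and> b \<in> V \<and> s \<le> t \<and> r \<le> t \<and> E a b \<and>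
      ((s = 0 \<and> r = 0) \<or> r = s + 1 \<or> s = r + 1)"
| "myc_E V E t (U a s) W \<longleftrightarrow> a \<in> V \<and> s = t"
| "myc_E V E t W (U b r) \<longleftrightarrow> b \<in> V \<and> r = t"
| "myc_E V E t W W \<longleftrightarrow> False"

datatype 'a cvert = M "'a myc" | X nat

definition C_V :: "'a set \<Rightarrow> nat \<Rightarrow> nat \<Rightarrow> 'a cvert set" where
  "C_V V t l = M ` myc_V V t \<union> X ` {1..l}"

fun C_E :: "'a set \<Rightarrow> ('a \<Rightarrow> 'a \<Rightarrow> bool) \<Rightarrow> nat \<Rightarrow> nat \<Rightarrow> 'a cvert \<Rightarrow> 'a cvert \<Rightarrow> bool" where
  "C_E V E t l (M a) (M b) \<longleftrightarrow> myc_E V E t a b"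
| "C_E V E t l (M a) (X i) \<longleftrightarrow> a = W \<and> 1 \<le> i \<and> i \<le> l"
| "C_E V E t l (X i) (M b) \<longleftrightarrow> b = W \<and> 1 \<le> i \<and> i \<le> l"
| "C_E V E t l (X i) (X j) \<longleftrightarrow> False"

end

(* Every vertex of mu_t(H) has at least two neighbours in C (H has no isolated vertices and
   the root has a neighbour at level t), so x_1, ..., x_l are exactly the pendant vertices of C.
   Hence every automorphism of C permutes them, fixes their common neighbour w, and restricts
   to an automorphism of mu_t(H) fixing w; conversely such automorphisms extend to C by the
   identity on the x_i. The x_i are pairwise twins, so a determining set of C misses at most one
   of them, and its remaining vertices together with w determine mu_t(H). *)

theory Submission
  imports Defs "HOL-Combinatorics.Transposition"
begin

lemma automorphism_in:
  assumes "automorphism V E f" "x \<in> V"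
  shows "f x \<in> V"
  using assms by (auto simp: automorphism_def bij_betw_def)

lemma automorphism_adj_iff:
  assumes "automorphism V E f" "x \<in> V" "y \<in> V"
  shows "E (f x) (f y) \<longleftrightarrow> E x y"
  using assms by (simp add: automorphism_def)

lemma automorphism_unique_neighbour:
  assumes aut: "automorphism V E f"
    and edges: "\<And>a b. E a b \<Longrightarrow> a \<in> V \<and> b \<in> V"
    and "x \<in> V" "y \<in> V" and nbr: "\<And>z. E x z \<longleftrightarrow> z = y"
  shows "E (f x) z \<longleftrightarrow> z = f y"
proof -
  have img: "f ` V = V" and pres: "\<forall>a\<in>V. \<forall>b\<in>V. E a b \<longleftrightarrow> E (f a) (f b)"
    using aut by (auto simp: automorphism_def bij_betw_def)
  show ?thesis
  proof
    assume fxz: "E (f x) z"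
    then have "z \<in> f ` V" using edges img by blast
    then obtain z' where z': "z' \<in> V" "z = f z'" by blast
    with fxz pres \<open>x \<in> V\<close> have "E x z'" by blast
    with nbr have "z' = y" by blast
    with z' show "z = f y" by simp
  next
    assume "z = f y"
    with pres nbr \<open>x \<in> V\<close> \<open>y \<in> V\<close> show "E (f x) z" by blast
  qed
qed

lemma determining_setD:
  assumes "determining_set V E S" "automorphism V E f" "\<And>s. s \<in> S \<Longrightarrow> f s = s" "v \<in> V"
  shows "f v = v"
  using assms unfolding determining_set_def by blast

lemma automorphism_transpose_twins:
  assumes "x \<in> V" "y \<in> V"
    and out: "\<And>z. E x z \<longleftrightarrow> E y z" and inn: "\<And>z. E z x \<longleftrightarrow> E z y"
  shows "automorphism V E (transpose x y)"
  unfolding automorphism_def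
proof (intro conjI ballI)
  show "bij_betw (transpose x y) V V" using assms by simp
  have "E (transpose x y a) c \<longleftrightarrow> E a c" for a c
    unfolding transpose_def using out by simp
  moreover have "E c (transpose x y a) \<longleftrightarrow> E c a" for a c
    unfolding transpose_def using inn by simp
  ultimately show "E a b \<longleftrightarrow> E (transpose x y a) (transpose x y b)" for a b
    by simp
qed

lemma determining_set_meets_twins:
  assumes det: "determining_set V E T" and "x \<in> V" "y \<in> V" "x \<noteq> y"
    and "\<And>z. E x z \<longleftrightarrow> E y z" "\<And>z. E z x \<longleftrightarrow> E z y"
  shows "x \<in> T \<or> y \<in> T"
proof (rule ccontr)
  assume "\<not> (x \<in> T \<or> y \<in> T)"
  then have "transpose x y s = s" if "s \<in> T" for s
    using that by (auto simp: transpose_eq_iff)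
  moreover have "automorphism V E (transpose x y)"
    using assms(2-) by (intro automorphism_transpose_twins)
  ultimately have "transpose x y x = x"
    using determining_setD[OF det] \<open>x \<in> V\<close> by blast
  with \<open>x \<noteq> y\<close> show False by simp
qed

lemma myc_E_in_myc_V: "myc_E V E t a b \<Longrightarrow> a \<in> myc_V V t \<and> b \<in> myc_V V t"
  by (cases a; cases b) (auto simp: myc_V_def)

lemma C_E_in_C_V: "C_E V E t l x y \<Longrightarrow> x \<in> C_V V t l \<and> y \<in> C_V V t l"
  by (cases x; cases y) (auto simp: C_V_def myc_V_def dest: myc_E_in_myc_V)

lemma finite_myc_V: "finite V \<Longrightarrow> finite (myc_V V t)"
proof -
  assume "finite V"
  have "myc_V V t = (\<lambda>(v, s). U v s) ` (V \<times> {..t}) \<union> {W}"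
    by (auto simp: myc_V_def)
  with \<open>finite V\<close> show ?thesis by simp
qed

lemma finite_C_V: "finite V \<Longrightarrow> finite (C_V V t l)"
  by (simp add: C_V_def finite_myc_V)

lemma M_in_C_V_iff [simp]: "M a \<in> C_V V t l \<longleftrightarrow> a \<in> myc_V V t"
  by (auto simp: C_V_def)

lemma X_in_C_V_iff [simp]: "X i \<in> C_V V t l \<longleftrightarrow> 1 \<le> i \<and> i \<le> l"
  by (auto simp: C_V_def)

lemma W_in_myc_V [simp]: "W \<in> myc_V V t"
  by (simp add: myc_V_def)

lemma C_E_X_iff:
  assumes "1 \<le> i" "i \<le> l"
  shows "C_E V E t l (X i) z \<longleftrightarrow> z = M W" and "C_E V E t l z (X i) \<longleftrightarrow> z = M W"
  using assms by (cases z; simp)+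

lemma C_E_M_two_neighbours:
  assumes "has_edge V E" "no_isolated V E" "l \<ge> 1" and a: "a \<in> myc_V V t"
  shows "\<exists>z1 z2. z1 \<noteq> z2 \<and> C_E V E t l (M a) z1 \<and> C_E V E t l (M a) z2"
proof (cases a)
  case (U v s)
  then have v: "v \<in> V" "s \<le> t" using a by (auto simp: myc_V_def)
  then obtain u where u: "u \<in> V" "E v u" using assms(2) by (auto simp: no_isolated_def)
  show ?thesis
  proof (intro exI conjI)
    show "M (U u (s - 1)) \<noteq> (if s < t then M (U u (s + 1)) else M W)" by auto
    show "C_E V E t l (M a) (M (U u (s - 1)))" using U v u by auto
    show "C_E V E t l (M a) (if s < t then M (U u (s + 1)) else M W)" using U v u by auto
  qed
next
  case W
  obtain v where "v \<in> V" using assms(1) by (auto simp: has_edge_def)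
  then show ?thesis
    by (intro exI[of _ "M (U v t)"] exI[of _ "X 1"]) (use W assms(3) in auto)
qed

lemma automorphism_C_pendant_neighbour:
  assumes "automorphism (C_V V t l) (C_E V E t l) f" "1 \<le> i" "i \<le> l"
  shows "C_E V E t l (f (X i)) z \<longleftrightarrow> z = f (M W)"
  by (rule automorphism_unique_neighbour[OF assms(1) C_E_in_C_V])
    (use assms C_E_X_iff(1)[OF assms(2,3)] in auto)

lemma automorphism_C_maps_pendants:
  assumes aut: "automorphism (C_V V t l) (C_E V E t l) f"
    and "has_edge V E" "no_isolated V E" "1 \<le> i" "i \<le> l"
  obtains j where "f (X i) = X j" "1 \<le> j" "j \<le> l"
proof -
  have fX_in: "f (X i) \<in> C_V V t l"
    using automorphism_in[OF aut] assms(4,5) by simp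
  show ?thesis
  proof (cases "f (X i)")
    case (M a)
    with fX_in have "a \<in> myc_V V t" by simp
    moreover have "l \<ge> 1" using assms(4,5) by simp
    ultimately obtain z1 z2 where z: "z1 \<noteq> z2" "C_E V E t l (M a) z1" "C_E V E t l (M a) z2"
      using C_E_M_two_neighbours assms(2,3) by blast
    with M have "C_E V E t l (f (X i)) z1" "C_E V E t l (f (X i)) z2" by simp_all
    then have "z1 = f (M W)" "z2 = f (M W)"
      using automorphism_C_pendant_neighbour[OF aut assms(4,5)] by blast+
    with z show ?thesis by simp
  next
    case (X j)
    with fX_in show ?thesis by (intro that[of j]) simp_all
  qed
qed

lemma automorphism_C_fixes_root:
  assumes aut: "automorphism (C_V V t l) (C_E V E t l) f"
    and "has_edge V E" "no_isolated V E" "l \<ge> 1"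
  shows "f (M W) = M W"
proof -
  obtain j where j: "f (X 1) = X j" "1 \<le> j" "j \<le> l"
    using automorphism_C_maps_pendants[OF aut assms(2,3)] assms(4) by auto
  have "C_E V E t l (f (X 1)) (M W)" using j by simp
  then show ?thesis
    using automorphism_C_pendant_neighbour[OF aut] assms(4) by auto
qed

lemma automorphism_C_maps_M:
  assumes aut: "automorphism (C_V V t l) (C_E V E t l) f"
    and "has_edge V E" "no_isolated V E" "l \<ge> 1" and a: "a \<in> myc_V V t"
  obtains b where "b \<in> myc_V V t" "f (M a) = M b"
proof -
  have fMa_in: "f (M a) \<in> C_V V t l" using automorphism_in[OF aut] a by simp
  show ?thesis
  proof (cases "f (M a)")
    case (M b)
    with fMa_in show ?thesis by (intro that[of b]) simp_all
  next
    case (X j)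
    with fMa_in have j: "1 \<le> j" "j \<le> l" by simp_all
    obtain z1 z2 where z: "z1 \<noteq> z2" "C_E V E t l (M a) z1" "C_E V E t l (M a) z2"
      using C_E_M_two_neighbours assms(2-5) by blast
    have "z1 \<in> C_V V t l" "z2 \<in> C_V V t l" "M a \<in> C_V V t l"
      using z C_E_in_C_V by blast+
    with aut z X have "C_E V E t l (X j) (f z1)" "C_E V E t l (X j) (f z2)" "f z1 \<noteq> f z2"
      by (auto simp: automorphism_def bij_betw_def dest: inj_onD)
    then show ?thesis by (simp only: C_E_X_iff(1)[OF j]) simp
  qed
qed

lemma automorphism_C_restrict:
  assumes aut: "automorphism (C_V V t l) (C_E V E t l) f"
    and "has_edge V E" "no_isolated V E" "l \<ge> 1"
  obtains g where "automorphism (myc_V V t) (myc_E V E t) g" "\<forall>a\<in>myc_V V t. f (M a) = M (g a)"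
proof
  let ?MV = "myc_V V t" and ?CV = "C_V V t l"
  \<comment> \<open>the second branch is never taken on myc_V V t, by automorphism_C_maps_M\<close>
  define g where "g a = (case f (M a) of M b \<Rightarrow> b | X _ \<Rightarrow> a)" for a
  have gM: "f (M a) = M (g a)" "g a \<in> ?MV" if "a \<in> ?MV" for a
    using automorphism_C_maps_M[OF aut assms(2-4) that] by (metis cvert.simps(5) g_def)+
  then show "\<forall>a\<in>?MV. f (M a) = M (g a)" by blast
  have inj: "inj_on f ?CV" and img: "f ` ?CV = ?CV"
    using aut by (auto simp: automorphism_def bij_betw_def)
  have "inj_on g ?MV"
  proof (rule inj_onI)
    fix a b assume "a \<in> ?MV" "b \<in> ?MV" "g a = g b"
    with gM have "f (M a) = f (M b)" by metis
    with inj \<open>a \<in> ?MV\<close> \<open>b \<in> ?MV\<close> show "a = b" by (auto dest: inj_onD)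
  qed
  moreover have "?MV \<subseteq> g ` ?MV"
  proof
    fix b assume "b \<in> ?MV"
    then obtain y where y: "y \<in> ?CV" "f y = M b"
      using img by (metis M_in_C_V_iff imageE)
    show "b \<in> g ` ?MV"
    proof (cases y)
      case (M a)
      with y gM show ?thesis by (metis M_in_C_V_iff cvert.inject(1) image_eqI)
    next
      case (X j)
      with y show ?thesis
        using automorphism_C_maps_pendants[OF aut assms(2,3)] by (metis X_in_C_V_iff cvert.distinct(1))
    qed
  qed
  ultimately have "bij_betw g ?MV ?MV" using gM by (auto simp: bij_betw_def)
  moreover have "myc_E V E t a b \<longleftrightarrow> myc_E V E t (g a) (g b)" if "a \<in> ?MV" "b \<in> ?MV" for a b
  proof -
    have "myc_E V E t a b \<longleftrightarrow> C_E V E t l (f (M a)) (f (M b))"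
      using automorphism_adj_iff[OF aut] that by simp
    with gM that show ?thesis by simp
  qed
  ultimately show "automorphism ?MV (myc_E V E t) g" by (simp add: automorphism_def)
qed

definition lift_C :: "('a myc \<Rightarrow> 'a myc) \<Rightarrow> 'a cvert \<Rightarrow> 'a cvert" where
  "lift_C g z = (case z of M a \<Rightarrow> M (g a) | X i \<Rightarrow> X i)"

lemma automorphism_lift_C:
  assumes aut: "automorphism (myc_V V t) (myc_E V E t) g" and gW: "g W = W"
  shows "automorphism (C_V V t l) (C_E V E t l) (lift_C g)"
  unfolding automorphism_def
proof (intro conjI ballI)
  let ?MV = "myc_V V t" and ?CV = "C_V V t l"
  have inj: "inj_on g ?MV" and img: "g ` ?MV = ?MV"
    using aut by (auto simp: automorphism_def bij_betw_def)
  have g_W_iff: "g a = W \<longleftrightarrow> a = W" if "a \<in> ?MV" for a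
    using inj gW that by (metis W_in_myc_V inj_onD)
  have "inj_on (lift_C g) ?CV"
  proof (rule inj_onI)
    fix x y assume "x \<in> ?CV" "y \<in> ?CV" "lift_C g x = lift_C g y"
    then show "x = y" using inj
      by (cases x; cases y) (auto simp: lift_C_def dest: inj_onD)
  qed
  moreover have "lift_C g ` ?CV = ?CV"
  proof -
    have "lift_C g ` ?CV = M ` g ` ?MV \<union> X ` {1..l}"
      by (simp add: C_V_def image_Un image_image lift_C_def)
    with img show ?thesis by (simp add: C_V_def)
  qed
  ultimately show "bij_betw (lift_C g) ?CV ?CV" by (simp add: bij_betw_def)
  fix x y assume "x \<in> ?CV" "y \<in> ?CV"
  then show "C_E V E t l x y \<longleftrightarrow> C_E V E t l (lift_C g x) (lift_C g y)"
    using aut g_W_iff by (cases x; cases y) (auto simp: lift_C_def automorphism_def)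
qed

lemma determining_set_C:
  assumes "has_edge V E" "no_isolated V E" "l \<ge> 1"
    and det: "determining_set (myc_V V t) (myc_E V E t) (S \<union> {W})"
  shows "determining_set (C_V V t l) (C_E V E t l) (M ` S \<union> X ` {2..l})"
  unfolding determining_set_def
proof (intro conjI allI impI)
  have S_sub: "S \<subseteq> myc_V V t" using det by (simp add: determining_set_def)
  then show "M ` S \<union> X ` {2..l} \<subseteq> C_V V t l" by auto
  fix f assume aut: "automorphism (C_V V t l) (C_E V E t l) f"
    and f_fixes: "\<forall>s\<in>M ` S \<union> X ` {2..l}. f s = s"
  obtain g where g: "automorphism (myc_V V t) (myc_E V E t) g"
    and fM: "\<forall>a\<in>myc_V V t. f (M a) = M (g a)"
    by (rule automorphism_C_restrict[OF aut assms(1-3)])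
  have "g s = s" if "s \<in> S \<union> {W}" for s
  proof -
    have "f (M s) = M s"
      using that f_fixes automorphism_C_fixes_root[OF aut assms(1-3)] by auto
    with fM that S_sub show ?thesis by auto
  qed
  then have g_id: "g a = a" if "a \<in> myc_V V t" for a
    using determining_setD[OF det g] that by blast
  obtain j where j: "f (X 1) = X j" "1 \<le> j" "j \<le> l"
    using automorphism_C_maps_pendants[OF aut assms(1,2)] assms(3) by auto
  have "j = 1"
  proof (rule ccontr)
    assume "j \<noteq> 1"
    with f_fixes j have "f (X j) = f (X 1)" by auto
    moreover have "inj_on f (C_V V t l)" using aut by (simp add: automorphism_def bij_betw_def)
    ultimately have "X j = X 1" using j assms(3) by (simp add: inj_on_eq_iff)
    with \<open>j \<noteq> 1\<close> show False by simp
  qed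
  show "\<forall>v\<in>C_V V t l. f v = v"
  proof
    fix v assume v: "v \<in> C_V V t l"
    show "f v = v"
    proof (cases v)
      case (M a)
      with v fM g_id show ?thesis by simp
    next
      case (X i)
      with v f_fixes j \<open>j = 1\<close> show ?thesis by (cases "i = 1") auto
    qed
  qed
qed

lemma determining_set_C_restrict:
  assumes det: "determining_set (C_V V t l) (C_E V E t l) T"
  shows "determining_set (myc_V V t) (myc_E V E t) ({a. M a \<in> T} \<union> {W})"
  unfolding determining_set_def
proof (intro conjI allI impI)
  show "{a. M a \<in> T} \<union> {W} \<subseteq> myc_V V t"
    using det by (auto simp: determining_set_def)
  fix g assume aut: "automorphism (myc_V V t) (myc_E V E t) g"
    and g_fixes: "\<forall>s\<in>{a. M a \<in> T} \<union> {W}. g s = s"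
  then have lift_aut: "automorphism (C_V V t l) (C_E V E t l) (lift_C g)"
    by (simp add: automorphism_lift_C)
  have lift_fixes: "lift_C g s = s" if "s \<in> T" for s
    using that g_fixes by (cases s) (simp_all add: lift_C_def)
  show "\<forall>v\<in>myc_V V t. g v = v"
  proof
    fix v assume "v \<in> myc_V V t"
    then have "lift_C g (M v) = M v"
      using determining_setD[OF det lift_aut lift_fixes] by simp
    then show "g v = v" by (simp add: lift_C_def)
  qed
qed

lemma determining_set_C_pendants:
  assumes det: "determining_set (C_V V t l) (C_E V E t l) T"
  shows "l - 1 \<le> card {i. X i \<in> T}"
proof -
  define B where "B = {i \<in> {1..l}. X i \<notin> T}"
  have B_sub: "B \<subseteq> {1..l}" by (auto simp: B_def)
  have "i = j" if "i \<in> B" "j \<in> B" for i j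
  proof (rule ccontr)
    assume "i \<noteq> j"
    with that have "X i \<in> T \<or> X j \<in> T"
      by (intro determining_set_meets_twins[OF det]) (auto simp: B_def C_E_X_iff)
    with that show False by (simp add: B_def)
  qed
  with B_sub have "card B \<le> 1"
    by (simp add: card_le_Suc0_iff_eq finite_subset)
  then have "l - 1 \<le> card ({1..l} - B)"
    using B_sub by (simp add: card_Diff_subset finite_subset)
  also have "\<dots> \<le> card {i. X i \<in> T}"
  proof (rule card_mono)
    show "{1..l} - B \<subseteq> {i. X i \<in> T}" by (auto simp: B_def)
    have "{i. X i \<in> T} \<subseteq> {1..l}"
      using det by (auto simp: determining_set_def)
    then show "finite {i. X i \<in> T}" by (rule finite_subset) simp
  qed
  finally show ?thesis .
qed

lemma card_cvert:
  assumes "finite T"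
  shows "card T = card {a. M a \<in> T} + card {i. X i \<in> T}"
proof -
  have fin: "finite {a. M a \<in> T}" "finite {i. X i \<in> T}"
    using finite_vimageI[OF assms, of M] finite_vimageI[OF assms, of X]
    by (simp_all add: vimage_def inj_on_def)
  have "T = M ` {a. M a \<in> T} \<union> X ` {i. X i \<in> T}"
    by (auto intro: cvert.exhaust)
  also have "card \<dots> = card {a. M a \<in> T} + card {i. X i \<in> T}"
    using fin by (subst card_Un_disjoint) (auto simp: card_image inj_on_def)
  finally show ?thesis .
qed

lemma card_M_image_Un_X_image:
  assumes "finite A" "finite I"
  shows "card (M ` A \<union> X ` I) = card A + card I"
proof -
  have "{a. M a \<in> M ` A \<union> X ` I} = A" "{i. X i \<in> M ` A \<union> X ` I} = I" by auto
  with assms show ?thesis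
    using card_cvert[of "M ` A \<union> X ` I"] by simp
qed

theorem mainTheorem1:
  fixes V :: "'a set" and E :: "'a \<Rightarrow> 'a \<Rightarrow> bool" and t l :: nat and S :: "'a myc set"
  assumes "simple_graph V E" and "has_edge V E" and "no_isolated V E"
    and "t \<ge> 1" and "l \<ge> 1"
    and "S \<subseteq> myc_V V t - {W}"
    and "determining_set (myc_V V t) (myc_E V E t) (S \<union> {W})"
    and "\<forall>S'. S' \<subseteq> myc_V V t - {W} \<longrightarrow> determining_set (myc_V V t) (myc_E V E t) (S' \<union> {W})
            \<longrightarrow> card S \<le> card S'"
  shows "min_determining_set (C_V V t l) (C_E V E t l) (M ` S \<union> X ` {2..l})"
  unfolding min_determining_set_def
proof (intro conjI allI impI)
  show "determining_set (C_V V t l) (C_E V E t l) (M ` S \<union> X ` {2..l})"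
    by (rule determining_set_C[OF assms(2,3,5,7)])
  fix T assume T: "determining_set (C_V V t l) (C_E V E t l) T"
  have "finite V" using assms(1) by (simp add: simple_graph_def)
  then have fin_MV: "finite (myc_V V t)" and fin_T: "finite T"
    using T finite_subset[OF _ finite_C_V] by (auto simp: finite_myc_V determining_set_def)
  have "{a. M a \<in> T} - {W} \<subseteq> myc_V V t - {W}"
    using T by (auto simp: determining_set_def)
  moreover have "determining_set (myc_V V t) (myc_E V E t) (({a. M a \<in> T} - {W}) \<union> {W})"
    using determining_set_C_restrict[OF T] by simp
  ultimately have "card S \<le> card ({a. M a \<in> T} - {W})"
    using assms(8) by blast
  also have "\<dots> \<le> card {a. M a \<in> T}"
    using fin_T by (intro card_mono) (auto intro: finite_vimageI[unfolded vimage_def] simp: inj_on_def)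
  finally have "card S + (l - 1) \<le> card {a. M a \<in> T} + card {i. X i \<in> T}"
    using determining_set_C_pendants[OF T] by linarith
  moreover have "finite S" using assms(6) fin_MV by (auto intro: finite_subset)
  ultimately show "card (M ` S \<union> X ` {2..l}) \<le> card T"
    using card_cvert[OF fin_T] by (simp add: card_M_image_Un_X_image)
qed

end
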